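(* Let $P_1,\dots,P_m$ be Hermitian $n$-qubit Pauli operators and $U_1,\dots,U_{m+1}$ be $n$-qubit Clifford unitaries such that, with $E_\beta=U_{m+1}\frac{I+\beta_mP_m}{2}U_m\cdots U_2\frac{I+\beta_1P_1}{2}U_1$ for $\beta\in\{-1,1\}^m$, one has $E_\beta^2=E_\beta$ for all $\beta$ and $\sum_\beta E_\beta^\dagger E_\beta=I$; let $\hat P_1,\dots,\hat P_m$ be pairwise commuting Hermitian Pauli operators with $E_\beta=\prod_{i=1}^m\frac{I+\beta_i\hat P_i}{2}$ for all $\beta$ (these exist). Then for every $\beta\in\{-1,1\}^m$ and all Pauli operators $Q_1,\dots,Q_{2m+1}$, the operator $$E'=Q_{2m+1}U_{m+1}Q_{2m}\frac{I+\beta_mP_m}{2}Q_{2m-1}U_m\cdots Q_3U_2Q_2\frac{I+\beta_1P_1}{2}Q_1U_1$$ satisfies $$E'=Q\cdot\frac{I+(-1)^{\gamma_1}\hat P_1}{2}\cdots\frac{I+(-1)^{\gamma_m}\hat P_m}{2}$$ for some Pauli operator $Q$ and some $\gamma\in\{0,1\}^m$.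
   Context: An $n$-qubit Pauli operator is $c\,\sigma_1\otimes\cdots\otimes\sigma_n$ with $c\in\{\pm1,\pm i\}$ and $\sigma_j\in\{I,X,Y,Z\}$; it is Hermitian iff $c\in\{\pm1\}$. A unitary $U$ is Clifford if $UPU^\dagger$ is a Pauli operator for every Pauli operator $P$. (In the paper, $E'$ is the Kraus operator of an execution path of a loop body in which Pauli faults $Q_j$ are inserted.) *)

theory Defs
  imports "Jordan_Normal_Form.Schur_Decomposition"
begin

datatype pauli1 = PI | PX | PY | PZ

definition pauli1_mat :: "pauli1 \<Rightarrow> complex mat" where
  "pauli1_mat s = (case s of
      PI \<Rightarrow> mat_of_rows_list 2 [[1, 0], [0, 1]]
    | PX \<Rightarrow> mat_of_rows_list 2 [[0, 1], [1, 0]]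
    | PY \<Rightarrow> mat_of_rows_list 2 [[0, -\<i>], [\<i>, 0]]
    | PZ \<Rightarrow> mat_of_rows_list 2 [[1, 0], [0, -1]])"

definition kron :: "complex mat \<Rightarrow> complex mat \<Rightarrow> complex mat" where
  "kron A B = mat (dim_row A * dim_row B) (dim_col A * dim_col B)
     (\<lambda>(i, j). A $$ (i div dim_row B, j div dim_col B) * B $$ (i mod dim_row B, j mod dim_col B))"

fun kron_list :: "pauli1 list \<Rightarrow> complex mat" where
  "kron_list [] = 1\<^sub>m 1"
| "kron_list (s # ss) = kron (pauli1_mat s) (kron_list ss)"

definition pauli_op :: "nat \<Rightarrow> complex mat \<Rightarrow> bool" where
  "pauli_op n P \<longleftrightarrow> (\<exists>c ss. c \<in> {1, -1, \<i>, -\<i>} \<and> length ss = n \<and> P = c \<cdot>\<^sub>m kron_list ss)"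

definition herm_pauli_op :: "nat \<Rightarrow> complex mat \<Rightarrow> bool" where
  "herm_pauli_op n P \<longleftrightarrow> (\<exists>c ss. c \<in> {1, -1} \<and> length ss = n \<and> P = c \<cdot>\<^sub>m kron_list ss)"

definition unitary_mat :: "nat \<Rightarrow> complex mat \<Rightarrow> bool" where
  "unitary_mat N U \<longleftrightarrow> U \<in> carrier_mat N N \<and> U * mat_adjoint U = 1\<^sub>m N \<and> mat_adjoint U * U = 1\<^sub>m N"

definition clifford :: "nat \<Rightarrow> complex mat \<Rightarrow> bool" where
  "clifford n U \<longleftrightarrow> unitary_mat (2 ^ n) U \<and>
     (\<forall>P. pauli_op n P \<longrightarrow> pauli_op n (U * P * mat_adjoint U))"

definition proj :: "nat \<Rightarrow> complex \<Rightarrow> complex mat \<Rightarrow> complex mat" where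
  "proj N b P = (1 / 2 :: complex) \<cdot>\<^sub>m (1\<^sub>m N + b \<cdot>\<^sub>m P)"

definition sign_vecs :: "nat \<Rightarrow> (nat \<Rightarrow> int) set" where
  "sign_vecs m = {\<beta>. (\<forall>i \<in> {1..m}. \<beta> i \<in> {-1, 1}) \<and> (\<forall>i. i \<notin> {1..m} \<longrightarrow> \<beta> i = 1)}"

text \<open>E_k = U_(k+1) (I+beta_k P_k)/2 U_k ... U_2 (I+beta_1 P_1)/2 U_1; E_beta = Epath N U P beta m.\<close>
fun Epath :: "nat \<Rightarrow> (nat \<Rightarrow> complex mat) \<Rightarrow> (nat \<Rightarrow> complex mat) \<Rightarrow> (nat \<Rightarrow> int) \<Rightarrow> nat \<Rightarrow> complex mat" where
  "Epath N U P \<beta> 0 = U 1"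
| "Epath N U P \<beta> (Suc k) = U (k + 2) * proj N (of_int (\<beta> (Suc k))) (P (Suc k)) * Epath N U P \<beta> k"

text \<open>Faulty path: F_0 = Q_1 U_1,
  F_(k+1) = Q_(2k+3) U_(k+2) Q_(2k+2) (I+beta_(k+1) P_(k+1))/2 F_k; so
  F_m = Q_(2m+1) U_(m+1) Q_(2m) (I+beta_m P_m)/2 Q_(2m-1) U_m ... Q_2 (I+beta_1 P_1)/2 Q_1 U_1.\<close>
fun Efault :: "nat \<Rightarrow> (nat \<Rightarrow> complex mat) \<Rightarrow> (nat \<Rightarrow> complex mat) \<Rightarrow> (nat \<Rightarrow> complex mat) \<Rightarrow> (nat \<Rightarrow> int) \<Rightarrow> nat \<Rightarrow> complex mat" where
  "Efault N U P Q \<beta> 0 = Q 1 * U 1"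
| "Efault N U P Q \<beta> (Suc k) =
     Q (2 * k + 3) * U (k + 2) * Q (2 * k + 2) * proj N (of_int (\<beta> (Suc k))) (P (Suc k)) * Efault N U P Q \<beta> k"

fun proj_prod :: "nat \<Rightarrow> (nat \<Rightarrow> complex) \<Rightarrow> (nat \<Rightarrow> complex mat) \<Rightarrow> nat \<Rightarrow> complex mat" where
  "proj_prod N c Ph 0 = 1\<^sub>m N"
| "proj_prod N c Ph (Suc k) = proj_prod N c Ph k * proj N (c (Suc k)) (Ph (Suc k))"

definition mat_sum :: "nat \<Rightarrow> 'b set \<Rightarrow> ('b \<Rightarrow> complex mat) \<Rightarrow> complex mat" where
  "mat_sum N S f = mat N N (\<lambda>ij. \<Sum>x\<in>S. f x $$ ij)"

end

theory Submission imports Defs begin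

text \<open>A Pauli fault can be pushed to the left through the whole execution path: a Pauli
  operator R either commutes or anticommutes with the Pauli operator P, so
  (I + b P)/2 R = R (I + b' P)/2 with b' = \<plusminus>b, and it passes a Clifford unitary U as
  U R = (U R U\<dagger>) U, where U R U\<dagger> is again Pauli. Hence the faulty path equals Q E for a Pauli
  operator Q and the fault-free path E of some other sign vector, and that path is a product of
  the commuting projectors (I \<plusminus> Ph i)/2 by assumption.\<close>

lemma sum_lessThan_mult_nested:
  "(\<Sum>k<(a::nat) * b. f k) = (\<Sum>x<a. \<Sum>y<b. f (x * b + y) :: 'a::comm_monoid_add)"
proof -
  have "(\<Sum>k<a * b. f k) = (\<Sum>x<a. sum f {x * b..<x * b + b})"
    by (rule sum.nat_group[symmetric])
  also have "\<dots> = (\<Sum>x<a. \<Sum>y<b. f (x * b + y))"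
    using sum.shift_bounds_nat_ivl[of f 0 "_ * b" b] by (simp add: atLeast0LessThan add.commute)
  finally show ?thesis .
qed

lemma smult_smult_mat: "a \<cdot>\<^sub>m (b \<cdot>\<^sub>m A) = (a * b :: 'a::semigroup_mult) \<cdot>\<^sub>m A"
  by (rule eq_matI) (auto simp: mult.assoc)

lemma one_smult_mat: "(1::'a::monoid_mult) \<cdot>\<^sub>m A = A"
  by (rule eq_matI) auto

lemma smult_mult_smult_mat:
  assumes "A \<in> carrier_mat k l" "B \<in> carrier_mat l r"
  shows "(a \<cdot>\<^sub>m A) * (b \<cdot>\<^sub>m B) = (a * b :: 'a::comm_semiring_0) \<cdot>\<^sub>m (A * B)"
  using assms by (simp add: mult_smult_assoc_mat[of A k l "b \<cdot>\<^sub>m B" r] mult_smult_distrib smult_smult_mat)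

lemma kron_dims [simp]:
  "dim_row (kron A B) = dim_row A * dim_row B" "dim_col (kron A B) = dim_col A * dim_col B"
  by (simp_all add: kron_def)

lemma kron_carrier:
  "A \<in> carrier_mat r1 c1 \<Longrightarrow> B \<in> carrier_mat r2 c2 \<Longrightarrow> kron A B \<in> carrier_mat (r1 * r2) (c1 * c2)"
  by (rule carrier_matI) (simp_all add: carrier_matD)

lemma kron_index:
  "i < dim_row A * dim_row B \<Longrightarrow> j < dim_col A * dim_col B \<Longrightarrow>
   kron A B $$ (i, j) = A $$ (i div dim_row B, j div dim_col B) * B $$ (i mod dim_row B, j mod dim_col B)"
  by (simp add: kron_def)

lemma index_mult_mat_sum:
  "i < dim_row X \<Longrightarrow> j < dim_col Y \<Longrightarrow> dim_col X = dim_row Y \<Longrightarrow>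
   (X * Y) $$ (i, j) = (\<Sum>k<dim_col X. X $$ (i, k) * Y $$ (k, j))"
  by (simp add: scalar_prod_def atLeast0LessThan)

lemma kron_mult:
  assumes A: "A \<in> carrier_mat ra ca" and B: "B \<in> carrier_mat rb cb"
    and C: "C \<in> carrier_mat ca cc" and D: "D \<in> carrier_mat cb cd"
    and pos: "rb > 0" "cb > 0" "cd > 0"
  shows "kron A B * kron C D = kron (A * C) (B * D)"
proof (rule eq_matI)
  fix i j assume "i < dim_row (kron (A * C) (B * D))" "j < dim_col (kron (A * C) (B * D))"
  then have i: "i < ra * rb" and j: "j < cc * cd" using A B C D by auto
  have dims: "dim_row A = ra" "dim_col A = ca" "dim_row B = rb" "dim_col B = cb"
     "dim_row C = ca" "dim_col C = cc" "dim_row D = cb" "dim_col D = cd" using A B C D by auto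
  have split: "(x * cb + y) div cb = x" "(x * cb + y) mod cb = y" if "y < cb" for x y
    using that pos by auto
  have "(kron A B * kron C D) $$ (i, j) = (\<Sum>k<ca * cb. kron A B $$ (i, k) * kron C D $$ (k, j))"
    using i j by (subst index_mult_mat_sum) (simp_all add: dims)
  also have "\<dots> = (\<Sum>k<ca * cb. A $$ (i div rb, k div cb) * B $$ (i mod rb, k mod cb) *
                                  (C $$ (k div cb, j div cd) * D $$ (k mod cb, j mod cd)))"
    using i j by (intro sum.cong refl) (simp add: kron_index dims)
  also have "\<dots> = (\<Sum>x<ca. \<Sum>y<cb. A $$ (i div rb, x) * B $$ (i mod rb, y) *
                                      (C $$ (x, j div cd) * D $$ (y, j mod cd)))"
    unfolding sum_lessThan_mult_nested by (intro sum.cong refl) (simp add: split)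
  also have "\<dots> = (\<Sum>x<ca. A $$ (i div rb, x) * C $$ (x, j div cd)) *
                  (\<Sum>y<cb. B $$ (i mod rb, y) * D $$ (y, j mod cd))"
    by (simp add: sum_product mult_ac)
  also have "\<dots> = (A * C) $$ (i div rb, j div cd) * (B * D) $$ (i mod rb, j mod cd)"
    using i j pos by (subst (1 2) index_mult_mat_sum) (simp_all add: dims less_mult_imp_div_less)
  also have "\<dots> = kron (A * C) (B * D) $$ (i, j)"
    using i j by (subst kron_index) (simp_all add: dims)
  finally show "(kron A B * kron C D) $$ (i, j) = kron (A * C) (B * D) $$ (i, j)" .
qed (use A B C D in simp_all)

lemma kron_smult: "kron (a \<cdot>\<^sub>m A) (b \<cdot>\<^sub>m B) = (a * b) \<cdot>\<^sub>m kron A B"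
proof (rule eq_matI)
  fix i j assume "i < dim_row ((a * b) \<cdot>\<^sub>m kron A B)" "j < dim_col ((a * b) \<cdot>\<^sub>m kron A B)"
  then have i: "i < dim_row A * dim_row B" and j: "j < dim_col A * dim_col B" by simp_all
  then have "dim_row B > 0" "dim_col B > 0" by (auto intro: gr0I)
  with i j show "kron (a \<cdot>\<^sub>m A) (b \<cdot>\<^sub>m B) $$ (i, j) = ((a * b) \<cdot>\<^sub>m kron A B) $$ (i, j)"
    by (simp add: kron_index less_mult_imp_div_less mult_ac)
qed simp_all

lemma mat_of_rows_list_2_mult:
  "mat_of_rows_list 2 [[a, b], [c, d]] * mat_of_rows_list 2 [[e, f], [g, h]] =
   mat_of_rows_list 2 [[a * e + b * g, a * f + b * h], [c * e + d * g, c * f + d * h :: 'a::semiring_0]]"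
proof (rule eq_matI)
  fix i j assume "i < dim_row (mat_of_rows_list 2 [[a * e + b * g, a * f + b * h], [c * e + d * g, c * f + d * h :: 'a]])"
    "j < dim_col (mat_of_rows_list 2 [[a * e + b * g, a * f + b * h], [c * e + d * g, c * f + d * h :: 'a]])"
  then have "i = 0 \<or> i = 1" "j = 0 \<or> j = 1" by (auto simp: mat_of_rows_list_def)
  then show "(mat_of_rows_list 2 [[a, b], [c, d]] * mat_of_rows_list 2 [[e, f], [g, h]]) $$ (i, j) =
    mat_of_rows_list 2 [[a * e + b * g, a * f + b * h], [c * e + d * g, c * f + d * h]] $$ (i, j)"
    by (auto simp: mat_of_rows_list_def scalar_prod_def numeral_2_eq_2)
qed (auto simp: mat_of_rows_list_def)

lemma smult_mat_of_rows_list_2: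
  "k \<cdot>\<^sub>m mat_of_rows_list 2 [[a, b], [c, d]] = mat_of_rows_list 2 [[k * a, k * b], [k * c, k * d :: 'a::times]]"
proof (rule eq_matI)
  fix i j assume "i < dim_row (mat_of_rows_list 2 [[k * a, k * b], [k * c, k * d :: 'a]])"
    "j < dim_col (mat_of_rows_list 2 [[k * a, k * b], [k * c, k * d :: 'a]])"
  then have "i = 0 \<or> i = 1" "j = 0 \<or> j = 1" by (auto simp: mat_of_rows_list_def)
  then show "(k \<cdot>\<^sub>m mat_of_rows_list 2 [[a, b], [c, d]]) $$ (i, j) =
    mat_of_rows_list 2 [[k * a, k * b], [k * c, k * d]] $$ (i, j)"
    by (auto simp: mat_of_rows_list_def)
qed (auto simp: mat_of_rows_list_def)

lemma pauli1_carrier: "pauli1_mat s \<in> carrier_mat 2 2"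
  by (cases s) (auto simp: pauli1_mat_def mat_of_rows_list_def)

fun pauli1_times :: "pauli1 \<Rightarrow> pauli1 \<Rightarrow> pauli1" where
  "pauli1_times PI b = b"
| "pauli1_times a PI = a"
| "pauli1_times PX PX = PI" | "pauli1_times PY PY = PI" | "pauli1_times PZ PZ = PI"
| "pauli1_times PX PY = PZ" | "pauli1_times PY PX = PZ"
| "pauli1_times PY PZ = PX" | "pauli1_times PZ PY = PX"
| "pauli1_times PZ PX = PY" | "pauli1_times PX PZ = PY"

fun pauli1_phase :: "pauli1 \<Rightarrow> pauli1 \<Rightarrow> complex" where
  "pauli1_phase PI b = 1"
| "pauli1_phase a PI = 1"
| "pauli1_phase PX PX = 1" | "pauli1_phase PY PY = 1" | "pauli1_phase PZ PZ = 1"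
| "pauli1_phase PX PY = \<i>" | "pauli1_phase PY PX = -\<i>"
| "pauli1_phase PY PZ = \<i>" | "pauli1_phase PZ PY = -\<i>"
| "pauli1_phase PZ PX = \<i>" | "pauli1_phase PX PZ = -\<i>"

lemma pauli1_mat_mult: "pauli1_mat a * pauli1_mat b = pauli1_phase a b \<cdot>\<^sub>m pauli1_mat (pauli1_times a b)"
  by (cases a; cases b) (simp_all add: pauli1_mat_def mat_of_rows_list_2_mult smult_mat_of_rows_list_2)

lemma pauli1_phase_in: "pauli1_phase a b \<in> {1, -1, \<i>, -\<i>}"
  by (cases a; cases b) auto

lemma pauli1_mat_commute:
  "\<exists>s\<in>{1, -1::int}. pauli1_mat a * pauli1_mat b = of_int s \<cdot>\<^sub>m (pauli1_mat b * pauli1_mat a)"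
proof -
  have "pauli1_times a b = pauli1_times b a" by (cases a; cases b) simp_all
  moreover have "\<exists>s\<in>{1, -1::int}. pauli1_phase a b = of_int s * pauli1_phase b a"
    by (cases a; cases b) simp_all
  ultimately show ?thesis by (auto simp: pauli1_mat_mult smult_smult_mat)
qed

lemma phase_mult_closed:
  "c \<in> {1, -1, \<i>, -\<i>} \<Longrightarrow> d \<in> {1, -1, \<i>, -\<i>} \<Longrightarrow> c * d \<in> {1, -1, \<i>, -\<i> :: complex}"
  by auto

lemma kron_list_carrier: "kron_list ss \<in> carrier_mat (2 ^ length ss) (2 ^ length ss)"
  by (induction ss) (auto dest: kron_carrier[OF pauli1_carrier])

lemma kron_list_Cons_mult:
  assumes "length ss = length ts"
  shows "kron_list (a # ss) * kron_list (b # ts) =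
         kron (pauli1_mat a * pauli1_mat b) (kron_list ss * kron_list ts)"
  using assms kron_list_carrier[of ss] kron_list_carrier[of ts]
  by (simp add: kron_mult[OF pauli1_carrier _ pauli1_carrier])

lemma kron_list_mult:
  "length ss = length ts \<Longrightarrow>
   \<exists>c\<in>{1, -1, \<i>, -\<i>}. \<exists>us. length us = length ss \<and> kron_list ss * kron_list ts = c \<cdot>\<^sub>m kron_list us"
proof (induction ss arbitrary: ts)
  case Nil then show ?case by (auto simp: one_smult_mat)
next
  case (Cons a ss)
  then obtain b ts' where ts: "ts = b # ts'" and len: "length ss = length ts'" by (cases ts) auto
  from Cons.IH[OF len] obtain c us where c: "c \<in> {1, -1, \<i>, -\<i>}" and us: "length us = length ss"
    and IH: "kron_list ss * kron_list ts' = c \<cdot>\<^sub>m kron_list us" by blast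
  have "kron_list (a # ss) * kron_list ts =
        kron (pauli1_mat a * pauli1_mat b) (kron_list ss * kron_list ts')"
    unfolding ts by (rule kron_list_Cons_mult[OF len])
  also have "\<dots> = (pauli1_phase a b * c) \<cdot>\<^sub>m kron_list (pauli1_times a b # us)"
    by (simp add: pauli1_mat_mult IH kron_smult)
  finally show ?case using phase_mult_closed[OF pauli1_phase_in[of a b] c] us
    by (intro bexI[of _ "pauli1_phase a b * c"] exI[of _ "pauli1_times a b # us"]) auto
qed

lemma kron_list_commute:
  "length ss = length ts \<Longrightarrow>
   \<exists>s\<in>{1, -1::int}. kron_list ss * kron_list ts = of_int s \<cdot>\<^sub>m (kron_list ts * kron_list ss)"
proof (induction ss arbitrary: ts)
  case Nil then show ?case by (auto simp: one_smult_mat)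
next
  case (Cons a ss)
  then obtain b ts' where ts: "ts = b # ts'" and len: "length ss = length ts'" by (cases ts) auto
  from Cons.IH[OF len] obtain s2 where s2: "s2 \<in> {1, -1::int}"
    and IH: "kron_list ss * kron_list ts' = of_int s2 \<cdot>\<^sub>m (kron_list ts' * kron_list ss)" by blast
  from pauli1_mat_commute obtain s1 where s1: "s1 \<in> {1, -1::int}"
    and ab: "pauli1_mat a * pauli1_mat b = of_int s1 \<cdot>\<^sub>m (pauli1_mat b * pauli1_mat a)" by blast
  have "kron_list (a # ss) * kron_list ts =
        kron (pauli1_mat a * pauli1_mat b) (kron_list ss * kron_list ts')"
    unfolding ts by (rule kron_list_Cons_mult[OF len])
  also have "\<dots> = of_int (s1 * s2) \<cdot>\<^sub>m kron (pauli1_mat b * pauli1_mat a) (kron_list ts' * kron_list ss)"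
    by (simp add: ab IH kron_smult)
  also have "\<dots> = of_int (s1 * s2) \<cdot>\<^sub>m (kron_list ts * kron_list (a # ss))"
    unfolding ts by (simp only: kron_list_Cons_mult[OF len[symmetric]])
  finally have "kron_list (a # ss) * kron_list ts = of_int (s1 * s2) \<cdot>\<^sub>m (kron_list ts * kron_list (a # ss))" .
  then show ?case using s1 s2 by (intro bexI[of _ "s1 * s2"]) auto
qed

lemma pauli_opE:
  assumes "pauli_op n P"
  obtains c ss where "c \<in> {1, -1, \<i>, -\<i>}" "length ss = n" "P = c \<cdot>\<^sub>m kron_list ss"
  using assms unfolding pauli_op_def by (elim exE conjE) (rule that)

lemma pauli_op_carrier: "pauli_op n P \<Longrightarrow> P \<in> carrier_mat (2 ^ n) (2 ^ n)"
  unfolding pauli_op_def using kron_list_carrier by (metis smult_carrier_mat)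

lemma herm_pauli_op_imp_pauli_op: "herm_pauli_op n P \<Longrightarrow> pauli_op n P"
  unfolding pauli_op_def herm_pauli_op_def by blast

lemma pauli_op_mult:
  assumes "pauli_op n A" "pauli_op n B"
  shows "pauli_op n (A * B)"
proof -
  obtain c ss where c: "c \<in> {1, -1, \<i>, -\<i>}" and ss: "length ss = n" and A: "A = c \<cdot>\<^sub>m kron_list ss"
    using assms(1) by (rule pauli_opE)
  obtain d ts where d: "d \<in> {1, -1, \<i>, -\<i>}" and ts: "length ts = n" and B: "B = d \<cdot>\<^sub>m kron_list ts"
    using assms(2) by (rule pauli_opE)
  have "length ss = length ts" using ss ts by simp
  then obtain e us where e: "e \<in> {1, -1, \<i>, -\<i>}" and us: "length us = length ss"
    and ssts: "kron_list ss * kron_list ts = e \<cdot>\<^sub>m kron_list us"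
    by (blast dest: kron_list_mult)
  have "A * B = (c * d) \<cdot>\<^sub>m (kron_list ss * kron_list ts)"
    unfolding A B using kron_list_carrier[of ss] kron_list_carrier[of ts] ss ts
    by (intro smult_mult_smult_mat) simp_all
  also have "\<dots> = (c * d * e) \<cdot>\<^sub>m kron_list us"
    by (simp only: ssts smult_smult_mat)
  finally show ?thesis
    unfolding pauli_op_def using phase_mult_closed[OF phase_mult_closed[OF c d] e] us ss
    by (intro exI[of _ "c * d * e"] exI[of _ us]) simp
qed

lemma pauli_op_commute:
  assumes "pauli_op n P" "pauli_op n Q"
  shows "\<exists>s\<in>{1, -1::int}. P * Q = of_int s \<cdot>\<^sub>m (Q * P)"
proof -
  obtain c ss where "c \<in> {1, -1, \<i>, -\<i>}" and ss: "length ss = n" and P: "P = c \<cdot>\<^sub>m kron_list ss"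
    using assms(1) by (rule pauli_opE)
  obtain d ts where "d \<in> {1, -1, \<i>, -\<i>}" and ts: "length ts = n" and Q: "Q = d \<cdot>\<^sub>m kron_list ts"
    using assms(2) by (rule pauli_opE)
  have "length ss = length ts" using ss ts by simp
  then obtain s where s: "s \<in> {1, -1::int}"
    and ssts: "kron_list ss * kron_list ts = of_int s \<cdot>\<^sub>m (kron_list ts * kron_list ss)"
    by (blast dest: kron_list_commute)
  have carrier: "kron_list ss \<in> carrier_mat (2 ^ n) (2 ^ n)" "kron_list ts \<in> carrier_mat (2 ^ n) (2 ^ n)"
    using kron_list_carrier[of ss] kron_list_carrier[of ts] ss ts by simp_all
  have "P * Q = (c * d) \<cdot>\<^sub>m (kron_list ss * kron_list ts)"
    unfolding P Q using carrier by (rule smult_mult_smult_mat)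
  also have "\<dots> = (c * d * of_int s) \<cdot>\<^sub>m (kron_list ts * kron_list ss)"
    by (simp only: ssts smult_smult_mat)
  also have "\<dots> = (of_int s * (d * c)) \<cdot>\<^sub>m (kron_list ts * kron_list ss)"
    by (simp add: mult_ac)
  also have "\<dots> = of_int s \<cdot>\<^sub>m (Q * P)"
    unfolding P Q smult_mult_smult_mat[OF carrier(2,1)] by (rule smult_smult_mat[symmetric])
  finally show ?thesis using s by (rule bexI)
qed

lemma proj_carrier: "P \<in> carrier_mat N N \<Longrightarrow> proj N b P \<in> carrier_mat N N"
  unfolding proj_def by simp

lemma proj_mult_commute:
  assumes P: "P \<in> carrier_mat N N" and Q: "Q \<in> carrier_mat N N" and PQ: "P * Q = s \<cdot>\<^sub>m (Q * P)"
  shows "proj N b P * Q = Q * proj N (b * s) P"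
proof -
  have "(1\<^sub>m N + b \<cdot>\<^sub>m P) * Q = Q + (b * s) \<cdot>\<^sub>m (Q * P)"
    using P Q by (simp add: add_mult_distrib_mat[of _ N N] mult_smult_assoc_mat[of _ N N] PQ smult_smult_mat)
  also have "\<dots> = Q * (1\<^sub>m N + (b * s) \<cdot>\<^sub>m P)"
    using P Q by (subst mult_add_distrib_mat[of _ N N]) (auto simp: mult_smult_distrib[of _ N N])
  finally show ?thesis
    using P Q unfolding proj_def
    by (simp add: mult_smult_assoc_mat[of _ N N] mult_smult_distrib[of Q N N "1\<^sub>m N + (b * s) \<cdot>\<^sub>m P" N])
qed

lemma unitary_mat_adjoint_cancel:
  assumes "unitary_mat N U" "A \<in> carrier_mat N N"
  shows "mat_adjoint U * (U * A) = A"
proof -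
  have U: "U \<in> carrier_mat N N" and UU: "mat_adjoint U * U = 1\<^sub>m N"
    using assms(1) unfolding unitary_mat_def by auto
  have "mat_adjoint U \<in> carrier_mat N N"
    using U unfolding mat_adjoint_def by auto
  then have "mat_adjoint U * (U * A) = mat_adjoint U * U * A"
    using U assms(2) by simp
  then show ?thesis using assms(2) by (simp add: UU)
qed

lemma push_left_through_layer:
  fixes Q' U Q R Pr Pr' E :: "complex mat"
  assumes carrier: "Q' \<in> carrier_mat N N" "U \<in> carrier_mat N N" "Q \<in> carrier_mat N N"
      "R \<in> carrier_mat N N" "Pr \<in> carrier_mat N N" "Pr' \<in> carrier_mat N N" "E \<in> carrier_mat N N"
    and U: "unitary_mat N U" and comm: "Pr * R = R * Pr'"
  shows "Q' * U * Q * Pr * (R * E) = (Q' * (U * (Q * R) * mat_adjoint U)) * (U * Pr' * E)"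
proof -
  have closed: "X * Y \<in> carrier_mat N N" if "X \<in> carrier_mat N N" "Y \<in> carrier_mat N N" for X Y :: "complex mat"
    using that by (rule mult_carrier_mat)
  have assoc: "X * Y * Z = X * (Y * Z)"
    if "X \<in> carrier_mat N N" "Y \<in> carrier_mat N N" "Z \<in> carrier_mat N N" for X Y Z :: "complex mat"
    using that by (rule assoc_mult_mat)
  have adj: "mat_adjoint U \<in> carrier_mat N N"
    using carrier(2) unfolding mat_adjoint_def by auto
  have comm': "Pr * (R * X) = R * (Pr' * X)" if "X \<in> carrier_mat N N" for X
    using assoc[OF carrier(5,4) that] assoc[OF carrier(4,6) that] comm by simp
  show ?thesis
    by (simp only: assoc closed carrier adj comm' unitary_mat_adjoint_cancel[OF U])
qed

lemma Epath_cong: "\<forall>i\<in>{1..k}. \<beta> i = \<beta>' i \<Longrightarrow> Epath N U P \<beta> k = Epath N U P \<beta>' k"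
  by (induction k) auto

lemma Epath_carrier:
  "\<forall>i\<in>{1..k+1}. U i \<in> carrier_mat N N \<Longrightarrow> \<forall>i\<in>{1..k}. P i \<in> carrier_mat N N \<Longrightarrow>
   Epath N U P \<beta> k \<in> carrier_mat N N"
  by (induction k) (auto intro!: mult_carrier_mat proj_carrier)

lemma Efault_eq_pauli_mult_Epath:
  assumes hP: "\<forall>i \<in> {1..m}. pauli_op n (P i)"
    and hU: "\<forall>i \<in> {1..m+1}. clifford n (U i)"
    and h\<beta>: "\<beta> \<in> sign_vecs m"
    and hQ: "\<forall>j \<in> {1..2*m+1}. pauli_op n (Q j)"
    and "k \<le> m"
  shows "\<exists>Q0 \<beta>'. pauli_op n Q0 \<and> \<beta>' \<in> sign_vecs m \<and>
           Efault (2^n) U P Q \<beta> k = Q0 * Epath (2^n) U P \<beta>' k"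
  using \<open>k \<le> m\<close>
proof (induction k)
  case 0 then show ?case using hQ h\<beta> by (intro exI[of _ "Q 1"] exI[of _ \<beta>]) auto
next
  case (Suc k)
  define N where "N = (2::nat) ^ n"
  from Suc obtain Q0 \<beta>' where Q0: "pauli_op n Q0" and \<beta>': "\<beta>' \<in> sign_vecs m"
    and IH: "Efault N U P Q \<beta> k = Q0 * Epath N U P \<beta>' k" unfolding N_def by auto
  have Pk: "pauli_op n (P (Suc k))" and Uk: "clifford n (U (k+2))"
    and Q2: "pauli_op n (Q (2*k+2))" and Q3: "pauli_op n (Q (2*k+3))"
    using hP hU hQ Suc.prems by auto
  have carrier_N: "pauli_op n X \<Longrightarrow> X \<in> carrier_mat N N" for X
    unfolding N_def by (rule pauli_op_carrier)
  have UkU: "unitary_mat N (U (k+2))" using Uk unfolding clifford_def N_def by simp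
  then have UkC: "U (k+2) \<in> carrier_mat N N" unfolding unitary_mat_def by simp
  have EC: "Epath N U P \<beta>' k \<in> carrier_mat N N"
    using hU hP Suc.prems carrier_N
    by (intro Epath_carrier) (auto simp: clifford_def unitary_mat_def N_def)
  obtain s where s: "s \<in> {1, -1::int}" and PQ0: "P (Suc k) * Q0 = of_int s \<cdot>\<^sub>m (Q0 * P (Suc k))"
    using pauli_op_commute[OF Pk Q0] by blast
  define \<beta>'' where "\<beta>'' = \<beta>'(Suc k := \<beta> (Suc k) * s)"
  have "\<beta> (Suc k) \<in> {-1, 1}" using h\<beta> Suc.prems unfolding sign_vecs_def by auto
  then have \<beta>'': "\<beta>'' \<in> sign_vecs m" using \<beta>' s Suc.prems unfolding sign_vecs_def \<beta>''_def by auto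
  have "Epath N U P \<beta>'' k = Epath N U P \<beta>' k" by (rule Epath_cong) (auto simp: \<beta>''_def)
  then have E'': "Epath N U P \<beta>'' (Suc k) =
                  U (k+2) * proj N (of_int (\<beta>'' (Suc k))) (P (Suc k)) * Epath N U P \<beta>' k"
    by (simp only: Epath.simps)
  have proj_Q0: "proj N (of_int (\<beta> (Suc k))) (P (Suc k)) * Q0 = Q0 * proj N (of_int (\<beta>'' (Suc k))) (P (Suc k))"
    using proj_mult_commute[OF carrier_N[OF Pk] carrier_N[OF Q0] PQ0] by (simp add: \<beta>''_def)
  define Q1 where "Q1 = Q (2*k+3) * (U (k+2) * (Q (2*k+2) * Q0) * mat_adjoint (U (k+2)))"
  have "pauli_op n Q1"
    using Uk Q2 Q3 Q0 unfolding Q1_def clifford_def by (blast intro: pauli_op_mult)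
  have "Efault N U P Q \<beta> (Suc k) =
        Q (2*k+3) * U (k+2) * Q (2*k+2) * proj N (of_int (\<beta> (Suc k))) (P (Suc k)) * (Q0 * Epath N U P \<beta>' k)"
    by (simp only: Efault.simps IH)
  also have "\<dots> = Q1 * Epath N U P \<beta>'' (Suc k)"
    unfolding Q1_def E''
    by (rule push_left_through_layer[OF carrier_N[OF Q3] UkC carrier_N[OF Q2] carrier_N[OF Q0]
          proj_carrier proj_carrier EC UkU proj_Q0]) (use carrier_N[OF Pk] in simp_all)
  finally show ?case using \<open>pauli_op n Q1\<close> \<beta>'' unfolding N_def by blast
qed

theorem mainTheorem10:
  fixes n m :: nat
    and P Ph U :: "nat \<Rightarrow> complex mat"
  assumes hP: "\<forall>i \<in> {1..m}. herm_pauli_op n (P i)"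
    and hU: "\<forall>i \<in> {1..m+1}. clifford n (U i)"
    and hidem: "\<forall>\<beta> \<in> sign_vecs m. Epath (2^n) U P \<beta> m * Epath (2^n) U P \<beta> m = Epath (2^n) U P \<beta> m"
    and hcompl: "mat_sum (2^n) (sign_vecs m)
                   (\<lambda>\<beta>. mat_adjoint (Epath (2^n) U P \<beta> m) * Epath (2^n) U P \<beta> m) = 1\<^sub>m (2^n)"
    and hPh: "\<forall>i \<in> {1..m}. herm_pauli_op n (Ph i)"
    and hcomm: "\<forall>i \<in> {1..m}. \<forall>j \<in> {1..m}. Ph i * Ph j = Ph j * Ph i"
    and hE: "\<forall>\<beta> \<in> sign_vecs m.
               Epath (2^n) U P \<beta> m = proj_prod (2^n) (\<lambda>i. of_int (\<beta> i)) Ph m"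
  shows "\<forall>\<beta> \<in> sign_vecs m. \<forall>Q :: nat \<Rightarrow> complex mat.
           (\<forall>j \<in> {1..2*m+1}. pauli_op n (Q j)) \<longrightarrow>
           (\<exists>Q0 \<gamma>. pauli_op n Q0 \<and> (\<forall>i \<in> {1..m}. \<gamma> i \<in> {0::nat, 1}) \<and>
              Efault (2^n) U P Q \<beta> m = Q0 * proj_prod (2^n) (\<lambda>i. (-1) ^ \<gamma> i) Ph m)"
proof (intro ballI allI impI)
  fix \<beta> and Q :: "nat \<Rightarrow> complex mat"
  assume h\<beta>: "\<beta> \<in> sign_vecs m" and hQ: "\<forall>j \<in> {1..2*m+1}. pauli_op n (Q j)"
  have "\<forall>i \<in> {1..m}. pauli_op n (P i)" using hP herm_pauli_op_imp_pauli_op by blast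
  then obtain Q0 \<beta>' where Q0: "pauli_op n Q0" and \<beta>': "\<beta>' \<in> sign_vecs m"
    and fault: "Efault (2^n) U P Q \<beta> m = Q0 * Epath (2^n) U P \<beta>' m"
    using Efault_eq_pauli_mult_Epath[OF _ hU h\<beta> hQ order.refl] by blast
  define \<gamma> where "\<gamma> i = (if \<beta>' i = 1 then 0 else 1 :: nat)" for i
  have sign: "\<beta>' i \<in> {-1, 1}" for i
    using \<beta>' unfolding sign_vecs_def by (cases "i \<in> {1..m}") auto
  have "(\<lambda>i. (-1::complex) ^ \<gamma> i) = (\<lambda>i. of_int (\<beta>' i))"
  proof
    fix i show "(-1::complex) ^ \<gamma> i = of_int (\<beta>' i)" using sign[of i] by (auto simp: \<gamma>_def)
  qed
  then have "Efault (2^n) U P Q \<beta> m = Q0 * proj_prod (2^n) (\<lambda>i. (-1) ^ \<gamma> i) Ph m"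
    using fault hE \<beta>' by simp
  then show "\<exists>Q0 \<gamma>. pauli_op n Q0 \<and> (\<forall>i \<in> {1..m}. \<gamma> i \<in> {0::nat, 1}) \<and>
              Efault (2^n) U P Q \<beta> m = Q0 * proj_prod (2^n) (\<lambda>i. (-1) ^ \<gamma> i) Ph m"
    using Q0 by (intro exI[of _ Q0] exI[of _ \<gamma>] conjI) (auto simp: \<gamma>_def)
qed

end
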